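(* Let $h:\mathbb{R}^d\to\mathbb{R}$ be convex, and let $\mathcal{S}=\{x:h(x)\le0\}$ be nonempty. Let $\mathcal{K}$ be a convex set with $\mathcal{S}\subseteq\mathcal{K}$. Assume there are $G,\sigma>0$ such that: - for all $x\in\mathcal{K}$ and all $s\in\partial h(x)$, $\|s\|\le G$; - whenever $x\in\mathcal{K}$ and $h(x)=0$, $\|s\|\ge\sigma$ for all $s\in\partial h(x)$. Let $x\in\mathcal{K}$ with $h(x)>0$, let $z=\Pi_{\mathcal{S}}(x)$, and let $s_x\in\partial h(x)$. Then there exist $\gamma\ge0$ and $s_z\in\partial h(z)$ such that: 1. $h(z)=0$; 2. $x-z=\gamma\frac{s_z}{\|s_z\|}$; 3. $\gamma\le\frac{h(x)}{\|s_z\|}$; 4. $\|s_z\|^2\le s_x^\top s_z$; 5. $\|s_x\|\ge\|s_z\|$.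
   Context: $\|\cdot\|$ is the Euclidean norm, $\Pi_{\mathcal{S}}$ is the Euclidean projection onto the closed convex set $\mathcal{S}$, and $\partial h(x)$ is the subdifferential of $h$ at $x$. *)

theory Defs
  imports "HOL-Analysis.Analysis"
begin

definition subdiff :: "('a::real_inner \<Rightarrow> real) \<Rightarrow> 'a \<Rightarrow> 'a set" where
  "subdiff h x = {s. \<forall>y. h y \<ge> h x + s \<bullet> (y - x)}"

end

theory Submission
  imports Defs
begin

text \<open>With \<open>z\<close> the projection of \<open>x\<close> onto the sublevel set \<open>S = {h \<le> 0}\<close>, the point \<open>z\<close> lies on the
  level set \<open>h = 0\<close>, and \<open>x - z\<close> is normal to \<open>S\<close> at \<open>z\<close>. Separating the epigraph of \<open>h\<close>
  from the product of the open half-space beyond this normal with \<open>(-\<infinity>, 0]\<close> gives a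
  non-vertical supporting hyperplane at \<open>(z, 0)\<close>, i.e. a subgradient \<open>s_z\<close> at \<open>z\<close> that is a
  nonnegative multiple of \<open>x - z\<close>; the lower bound \<open>\<sigma>\<close> makes the multiple positive. The
  remaining inequalities follow from the subgradient inequality at \<open>z\<close>, monotonicity of the
  subdifferential and Cauchy-Schwarz.\<close>

lemma nonneg_on_halfspace_imp_nonneg_multiple:
  fixes a n :: "'a::real_inner"
  assumes "n \<noteq> 0" and nonneg: "\<And>w. n \<bullet> w > 0 \<Longrightarrow> a \<bullet> w \<ge> 0"
  shows "\<exists>t\<ge>0. a = t *\<^sub>R n"
proof -
  define t where "t = (a \<bullet> n) / (n \<bullet> n)"
  define p where "p = a - t *\<^sub>R n"
  have nn: "n \<bullet> n > 0" using \<open>n \<noteq> 0\<close> by simp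
  have pn: "p \<bullet> n = 0" unfolding p_def t_def using nn by (simp add: inner_diff_left)
  have ap: "a \<bullet> p = p \<bullet> p"
    using pn by (simp add: p_def inner_diff_left inner_diff_right inner_commute)
  have "p = 0"
  proof (rule ccontr)
    assume "p \<noteq> 0"
    then have pp: "p \<bullet> p > 0" by simp
    define r where "r = (a \<bullet> n + 1) / (p \<bullet> p)"
    have "n \<bullet> (n - r *\<^sub>R p) > 0"
      using nn pn by (simp add: inner_diff_right inner_commute)
    then have "0 \<le> a \<bullet> n - r * (p \<bullet> p)"
      using nonneg ap by (fastforce simp: inner_diff_right)
    moreover have "r * (p \<bullet> p) = a \<bullet> n + 1" unfolding r_def using pp by simp
    ultimately show False by simp
  qed
  moreover have "t \<ge> 0" unfolding t_def using nonneg[of n] nn by simp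
  ultimately show ?thesis unfolding p_def by auto
qed

lemma convex_sublevel:
  assumes "convex_on UNIV h"
  shows "convex {y. h y \<le> (c::real)}"
proof (rule convexI)
  fix y1 y2 and u v :: real
  assume y: "y1 \<in> {y. h y \<le> c}" "y2 \<in> {y. h y \<le> c}" and uv: "0 \<le> u" "0 \<le> v" "u + v = 1"
  have u: "u = 1 - v" using uv by simp
  have "h (u *\<^sub>R y1 + v *\<^sub>R y2) \<le> u * h y1 + v * h y2"
    using convex_onD[OF assms, of v y1 y2] uv by (simp add: u)
  also have "\<dots> \<le> u * c + v * c"
    using y uv by (intro add_mono mult_left_mono) auto
  finally show "u *\<^sub>R y1 + v *\<^sub>R y2 \<in> {y. h y \<le> c}" using uv by (simp add: distrib_right[symmetric])
qed

lemma epigraph_bounded_functional_neg: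
  fixes h :: "'a::real_inner \<Rightarrow> real"
  assumes "(a, b) \<noteq> 0" and bounded: "\<And>y r. h y \<le> r \<Longrightarrow> a \<bullet> y + b * r \<le> c"
  shows "b < 0"
proof (rule ccontr)
  assume "\<not> b < 0"
  show False
  proof (cases "b = 0")
    case True
    with assms(1) have "a \<bullet> a > 0" by (simp add: zero_prod_def)
    define y where "y = ((\<bar>c\<bar> + 1) / (a \<bullet> a)) *\<^sub>R a"
    have "a \<bullet> y = \<bar>c\<bar> + 1" unfolding y_def using \<open>a \<bullet> a > 0\<close> by simp
    with bounded[of y "h y"] True show False by simp
  next
    case False
    with \<open>\<not> b < 0\<close> have "b > 0" by simp
    define r where "r = max (h 0) ((\<bar>c\<bar> + 1) / b)"
    have "(\<bar>c\<bar> + 1) / b \<le> r" by (simp add: r_def)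
    then have "\<bar>c\<bar> + 1 \<le> b * r" using \<open>b > 0\<close> by (simp add: field_simps)
    with bounded[of 0 r] show False by (simp add: r_def)
  qed
qed

lemma sublevel_normal_imp_subgradient:
  fixes h :: "'a::euclidean_space \<Rightarrow> real"
  assumes hconv: "convex_on UNIV h" and "n \<noteq> 0"
    and normal: "\<And>y. h y \<le> h z \<Longrightarrow> n \<bullet> (y - z) \<le> 0"
  shows "\<exists>k\<ge>0. k *\<^sub>R n \<in> subdiff h z"
proof -
  define B where "B = {y. n \<bullet> y > n \<bullet> z} \<times> {..h z}"
  have "epigraph UNIV h \<inter> B = {}"
  proof (intro equals0I)
    fix p assume "p \<in> epigraph UNIV h \<inter> B"
    then have "h (fst p) \<le> h z" and "n \<bullet> fst p > n \<bullet> z" by (auto simp: B_def epigraph_def)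
    then show False using normal[of "fst p"] by (simp add: inner_diff_right)
  qed
  moreover have "(z + n, h z) \<in> B" using \<open>n \<noteq> 0\<close> by (simp add: B_def inner_add_right)
  moreover have "(z, h z) \<in> epigraph UNIV h" by (simp add: mem_epigraph)
  moreover have "convex B" unfolding B_def by (intro convex_Times convex_halfspace_gt) simp
  ultimately obtain w c where "w \<noteq> 0"
    and below: "\<forall>p\<in>epigraph UNIV h. w \<bullet> p \<le> c" and above: "\<forall>p\<in>B. w \<bullet> p \<ge> c"
    using separating_hyperplane_sets[OF convex_epigraphI[OF hconv]] by blast
  obtain a b where w: "w = (a, b)" by (cases w)
  have epi: "a \<bullet> y + b * r \<le> c" if "h y \<le> r" for y r
    using below[rule_format, of "(y, r)"] that by (simp add: w mem_epigraph)
  have half: "c \<le> a \<bullet> y + b * h z" if "n \<bullet> y > n \<bullet> z" for y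
    using above that by (auto simp: w B_def)
  have "b < 0" using epigraph_bounded_functional_neg[of a b h c] \<open>w \<noteq> 0\<close> epi w by blast
  \<comment> \<open>\<open>(z, h z)\<close> lies in the closure of \<open>B\<close>, so the hyperplane passes through it\<close>
  define \<delta> where "\<delta> = c - (a \<bullet> z + b * h z)"
  have gap: "\<delta> \<le> t * (a \<bullet> n)" if "t > 0" for t
    using half[of "z + t *\<^sub>R n"] that \<open>n \<noteq> 0\<close> by (simp add: \<delta>_def inner_add_right)
  have "\<delta> = 0"
  proof (rule ccontr)
    assume "\<delta> \<noteq> 0"
    with epi[of z "h z"] have "\<delta> > 0" by (simp add: \<delta>_def)
    with gap[of 1] have "a \<bullet> n > 0" by simp
    with gap[of "\<delta> / (2 * (a \<bullet> n))"] \<open>\<delta> > 0\<close> show False by simp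
  qed
  have "a \<bullet> v \<ge> 0" if "n \<bullet> v > 0" for v
    using half[of "z + v"] that \<open>\<delta> = 0\<close> by (simp add: \<delta>_def inner_add_right)
  then obtain t where "t \<ge> 0" and a: "a = t *\<^sub>R n"
    using nonneg_on_halfspace_imp_nonneg_multiple[OF \<open>n \<noteq> 0\<close>] by blast
  have "(a /\<^sub>R (- b)) \<in> subdiff h z"
  proof -
    have "h z + (a /\<^sub>R (- b)) \<bullet> (y - z) \<le> h y" for y
      using epi[of y "h y"] \<open>\<delta> = 0\<close> \<open>b < 0\<close>
      by (simp add: \<delta>_def inner_diff_right field_simps)
    then show ?thesis by (simp add: subdiff_def)
  qed
  moreover have "a /\<^sub>R (- b) = (t / (- b)) *\<^sub>R n" by (simp add: a divide_inverse_commute)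
  moreover have "t / (- b) \<ge> 0" using \<open>t \<ge> 0\<close> \<open>b < 0\<close> by (simp add: divide_nonneg_neg)
  ultimately show ?thesis by metis
qed

lemma closest_point_sublevel_on_level:
  fixes h :: "'a::euclidean_space \<Rightarrow> real"
  assumes hconv: "convex_on UNIV h" and "closed {y. h y \<le> 0}" and "{y. h y \<le> 0} \<noteq> {}"
    and "h x > 0"
  shows "h (closest_point {y. h y \<le> 0} x) = 0"
proof (rule ccontr)
  define z where "z = closest_point {y. h y \<le> 0} x"
  assume "h z \<noteq> 0"
  moreover have "h z \<le> 0" using closest_point_in_set[OF assms(2,3)] by (simp add: z_def)
  ultimately have "h z < 0" by simp
  define e where "e = - h z / (h x - h z)"
  have e: "0 < e" "e < 1" unfolding e_def using \<open>h z < 0\<close> \<open>h x > 0\<close> by (auto simp: field_simps)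
  define z' where "z' = (1 - e) *\<^sub>R z + e *\<^sub>R x"
  have "h z' \<le> (1 - e) * h z + e * h x"
    unfolding z'_def using convex_onD[OF hconv] e by simp
  also have "\<dots> = 0" unfolding e_def using \<open>h z < 0\<close> \<open>h x > 0\<close> by (simp add: field_simps)
  finally have "dist x z \<le> dist x z'"
    using closest_point_le[OF assms(2)] by (simp add: z_def)
  moreover have "x - z' = (1 - e) *\<^sub>R (x - z)" unfolding z'_def by (simp add: algebra_simps)
  then have "dist x z' = (1 - e) * dist x z" using e by (simp add: dist_norm)
  moreover have "x \<noteq> z" using \<open>h x > 0\<close> \<open>h z < 0\<close> by auto
  ultimately show False using e by (simp add: mult_le_cancel_right1)
qed

lemma subdiff_monotone:
  assumes "s \<in> subdiff h x" and "t \<in> subdiff h y"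
  shows "(s - t) \<bullet> (x - y) \<ge> 0"
proof -
  have "h y \<ge> h x + s \<bullet> (y - x)" and "h x \<ge> h y + t \<bullet> (x - y)"
    using assms by (auto simp: subdiff_def)
  then show ?thesis by (simp add: inner_diff_left inner_diff_right algebra_simps)
qed

lemma subgradient_along_displacement_norm_le:
  assumes sx: "s_x \<in> subdiff h x" and sz: "s_z \<in> subdiff h z"
    and parallel: "s_z = k *\<^sub>R (x - z)" and "k \<ge> 0"
  shows "(norm s_z)\<^sup>2 \<le> s_x \<bullet> s_z" and "norm s_z \<le> norm s_x"
proof -
  have "s_z \<bullet> (x - z) \<le> s_x \<bullet> (x - z)"
    using subdiff_monotone[OF sx sz] by (simp add: inner_diff_left)
  then have "k * (s_z \<bullet> (x - z)) \<le> k * (s_x \<bullet> (x - z))"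
    using \<open>k \<ge> 0\<close> by (rule mult_left_mono)
  then show sq: "(norm s_z)\<^sup>2 \<le> s_x \<bullet> s_z"
    unfolding power2_norm_eq_inner by (simp add: parallel)
  have "norm s_z * norm s_z \<le> norm s_x * norm s_z"
    using sq norm_cauchy_schwarz[of s_x s_z] by (simp add: power2_eq_square)
  then show "norm s_z \<le> norm s_x"
    by (cases "s_z = 0") auto
qed

theorem lemma3:
  fixes h :: "'a::euclidean_space \<Rightarrow> real"
    and K :: "'a set" and G \<sigma> :: real and x s_x :: 'a
  assumes hconv: "convex_on UNIV h"
    and Sne: "{y. h y \<le> 0} \<noteq> {}"
    and Kconv: "convex K"
    and SK: "{y. h y \<le> 0} \<subseteq> K"
    and Gpos: "G > 0" and sigpos: "\<sigma> > 0"
    and bound: "\<forall>y\<in>K. \<forall>s\<in>subdiff h y. norm s \<le> G"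
    and lower: "\<forall>y\<in>K. h y = 0 \<longrightarrow> (\<forall>s\<in>subdiff h y. norm s \<ge> \<sigma>)"
    and xK: "x \<in> K" and hx: "h x > 0"
    and sx: "s_x \<in> subdiff h x"
  shows "\<exists>\<gamma> s_z. \<gamma> \<ge> 0 \<and> s_z \<in> subdiff h (closest_point {y. h y \<le> 0} x) \<and>
           h (closest_point {y. h y \<le> 0} x) = 0 \<and>
           x - closest_point {y. h y \<le> 0} x = (\<gamma> / norm s_z) *\<^sub>R s_z \<and>
           \<gamma> \<le> h x / norm s_z \<and>
           (norm s_z)\<^sup>2 \<le> s_x \<bullet> s_z \<and>
           norm s_x \<ge> norm s_z"
proof -
  define S where "S = {y. h y \<le> 0}"
  define z where "z = closest_point S x"
  have "closed S"
    unfolding S_def using convex_on_continuous[OF open_UNIV hconv]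
    by (intro closed_Collect_le continuous_on_const)
  have "z \<in> S" using closest_point_in_set[OF \<open>closed S\<close>] Sne by (simp add: z_def S_def)
  have hz: "h z = 0"
    using closest_point_sublevel_on_level[OF hconv _ Sne hx] \<open>closed S\<close> by (simp add: z_def S_def)
  have "x - z \<noteq> 0" using hx hz by auto
  moreover have "(x - z) \<bullet> (y - z) \<le> 0" if "h y \<le> h z" for y
    using closest_point_dot[OF convex_sublevel[OF hconv] \<open>closed S\<close>[unfolded S_def]] that hz
    by (simp add: z_def S_def)
  ultimately obtain k where "k \<ge> 0" and sz: "k *\<^sub>R (x - z) \<in> subdiff h z"
    using sublevel_normal_imp_subgradient[OF hconv] by blast
  define s_z where "s_z = k *\<^sub>R (x - z)"
  have "z \<in> K" using SK \<open>z \<in> S\<close> by (simp add: S_def subset_eq)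
  then have "norm s_z \<ge> \<sigma>" using lower hz sz unfolding s_z_def by blast
  then have "norm s_z > 0" using sigpos by linarith
  then have "k > 0" using \<open>k \<ge> 0\<close> by (cases "k = 0") (auto simp: s_z_def)
  have norm_sz: "norm s_z = k * norm (x - z)" using \<open>k \<ge> 0\<close> by (simp add: s_z_def)
  have "x - z = (norm (x - z) / norm s_z) *\<^sub>R s_z" using \<open>k > 0\<close> \<open>x - z \<noteq> 0\<close>
    by (simp add: norm_sz s_z_def)
  moreover have "norm (x - z) \<le> h x / norm s_z"
  proof -
    have "norm s_z * norm (x - z) = s_z \<bullet> (x - z)"
      using \<open>k \<ge> 0\<close> by (simp add: norm_sz s_z_def power2_norm_eq_inner[symmetric] power2_eq_square)
    also have "\<dots> \<le> h x" using sz hz by (simp add: subdiff_def s_z_def)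
    finally show ?thesis using \<open>norm s_z > 0\<close> by (simp add: field_simps)
  qed
  ultimately show ?thesis
    using sz hz subgradient_along_displacement_norm_le[OF sx sz _ \<open>k \<ge> 0\<close>]
    by (intro exI[of _ "norm (x - z)"] exI[of _ s_z]) (simp add: z_def S_def s_z_def)
qed

end
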